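(* Let $A\in\mathbb{R}^{n\times n}$ and $B\in\mathbb{R}^{n\times m}$ with $\rho(|A|)<1$, and let $T$ be a positive integer. Let $i,j\in\{1,\dots,n\}$, $i\neq j$, and $w\in\mathbb{R}$ be such that $\rho(|A|+|w|e_je_i^{\top})<1$. Then $$\operatorname{tr}(\mathcal{W}_A)\le\operatorname{tr}(\mathcal{W}^{\infty}_A)\le\operatorname{tr}(\mathcal{H}_{\mathcal{X}})$$ and $$\operatorname{tr}(\mathcal{W}_{A+we_je_i^{\top}})\le(1+\alpha\beta)\operatorname{tr}(\mathcal{H}_{\mathcal{X}})+\alpha^2\gamma\bar{\gamma}.$$
   Context: $|\cdot|$ is taken entrywise; $\rho$ is the spectral radius; $e_k$ is the $k$-th canonical unit vector; $\|\cdot\|$ is the Euclidean norm. For $Z\in\mathbb{R}^{n\times n}$, $\mathcal{W}_Z=\sum_{t=0}^{T-1}Z^tBB^{\top}(Z^t)^{\top}$ and $\mathcal{W}^\infty_Z=\sum_{t=0}^{\infty}Z^tBB^{\top}(Z^t)^{\top}$. Define $\mathcal{X}=(I-|A|)^{-1}$, $\mathcal{H}_{\mathcal{X}}=\mathcal{X}|B||B|^{\top}\mathcal{X}^{\top}$, $\alpha_{pq}=\frac{|w|}{1-|w|e_p^{\top}\mathcal{X}e_q}$, $\alpha=\max_{p\neq q}\alpha_{pq}$, $\beta=\max\{\max_{p\neq q}2e_p^{\top}\mathcal{X}e_q,\ \max_{p\neq q}e_p^{\top}\mathcal{X}e_q+\max_{q}\|\mathcal{X}e_q\|\}$, $\gamma=\max_k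 e_k^{\top}\mathcal{X}^{\top}\mathcal{X}e_k$, $\bar\gamma=\max_k e_k^{\top}\mathcal{X}|B||B|^{\top}\mathcal{X}^{\top}e_k$. *)

theory Defs
  imports "Jordan_Normal_Form.Spectral_Radius" "Jordan_Normal_Form.Gauss_Jordan_Elimination"
begin

(* Matrices are JNF matrices; indices are 0-based (paper's 1..n becomes 0..<n). *)

definition abs_mat :: "real mat \<Rightarrow> real mat" where
  "abs_mat A = map_mat abs A"

definition rho :: "real mat \<Rightarrow> real" where
  "rho A = spectral_radius (map_mat complex_of_real A)"

definition tr :: "real mat \<Rightarrow> real" where
  "tr A = (\<Sum>k<dim_row A. A $$ (k,k))"

definition unit_outer :: "nat \<Rightarrow> nat \<Rightarrow> nat \<Rightarrow> real mat" where
  "unit_outer n j i = mat n n (\<lambda>(r,c). if r = j \<and> c = i then 1 else 0)"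

definition W_fin :: "nat \<Rightarrow> real mat \<Rightarrow> real mat \<Rightarrow> real mat" where
  "W_fin T Z B = mat (dim_row Z) (dim_row Z)
     (\<lambda>(r,c). \<Sum>t<T. ((Z ^\<^sub>m t) * B * B\<^sup>T * (Z ^\<^sub>m t)\<^sup>T) $$ (r,c))"

definition W_inf :: "real mat \<Rightarrow> real mat \<Rightarrow> real mat" where
  "W_inf Z B = mat (dim_row Z) (dim_row Z)
     (\<lambda>(r,c). \<Sum>t. ((Z ^\<^sub>m t) * B * B\<^sup>T * (Z ^\<^sub>m t)\<^sup>T) $$ (r,c))"

definition Xmat :: "real mat \<Rightarrow> real mat" where
  "Xmat A = the (mat_inverse (1\<^sub>m (dim_row A) - abs_mat A))"

definition Hmat :: "real mat \<Rightarrow> real mat \<Rightarrow> real mat" where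
  "Hmat A B = Xmat A * abs_mat B * (abs_mat B)\<^sup>T * (Xmat A)\<^sup>T"

definition alpha_pq :: "real mat \<Rightarrow> real \<Rightarrow> nat \<Rightarrow> nat \<Rightarrow> real" where
  "alpha_pq A w p q = \<bar>w\<bar> / (1 - \<bar>w\<bar> * Xmat A $$ (p,q))"

definition alpha :: "real mat \<Rightarrow> real \<Rightarrow> real" where
  "alpha A w = Max {alpha_pq A w p q | p q. p < dim_row A \<and> q < dim_row A \<and> p \<noteq> q}"

definition col_norm :: "real mat \<Rightarrow> nat \<Rightarrow> real" where
  "col_norm X q = sqrt (\<Sum>r<dim_row X. (X $$ (r,q))\<^sup>2)"

definition beta :: "real mat \<Rightarrow> real" where
  "beta A = (let n = dim_row A; X = Xmat A;
              mo = Max {X $$ (p,q) | p q. p < n \<and> q < n \<and> p \<noteq> q} in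
     max (Max {2 * X $$ (p,q) | p q. p < n \<and> q < n \<and> p \<noteq> q})
         (mo + Max {col_norm X q | q. q < n}))"

definition gamma :: "real mat \<Rightarrow> real" where
  "gamma A = Max {((Xmat A)\<^sup>T * Xmat A) $$ (k,k) | k. k < dim_row A}"

definition gamma_bar :: "real mat \<Rightarrow> real mat \<Rightarrow> real" where
  "gamma_bar A B = Max {Hmat A B $$ (k,k) | k. k < dim_row A}"

end

theory Submission
  imports Defs "HOL-Analysis.Convex"
begin

text \<open>Write \<open>M = \<bar>A\<bar>\<close> and \<open>X = (I - M)\<inverse>\<close>. Since \<open>\<rho>(M) < 1\<close> the powers of \<open>M\<close> vanish, so
  \<open>X\<close> is the sum of the Neumann series of \<open>M\<close> and is entrywise nonnegative. As
  \<open>\<bar>A\<^sup>t\<bar> \<le> M\<^sup>t\<close> entrywise, the \<open>k\<close>-th row of \<open>A\<^sup>t B\<close> is dominated by that of \<open>M\<^sup>t \<bar>B\<bar>\<close>;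
  summing over \<open>t\<close> bounds the \<open>k\<close>-th diagonal entry of \<open>W\<^sub>A\<close> (finite or infinite) by that
  of \<open>X \<bar>B\<bar> (X \<bar>B\<bar>)\<^sup>T = H\<^sub>X\<close>.

  For \<open>A + w e\<^sub>j e\<^sub>i\<^sup>T\<close> the same argument applies with \<open>M' = M + \<bar>w\<bar> e\<^sub>j e\<^sub>i\<^sup>T\<close>, whose
  inverse \<open>(I - M')\<inverse>\<close> is, by Sherman--Morrison, \<open>X + \<alpha>\<^sub>i\<^sub>j X e\<^sub>j e\<^sub>i\<^sup>T X\<close>. Hence the rows
  of \<open>G = X \<bar>B\<bar>\<close> get replaced by \<open>G\<^sub>k + \<alpha>\<^sub>i\<^sub>j X\<^sub>k\<^sub>j G\<^sub>i\<close>; expanding the squares, the cross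
  term is at most \<open>\<beta>/2 \<cdot> tr H\<^sub>X\<close> by Cauchy--Schwarz and the quadratic term at most
  \<open>gamma \<cdot> gamma_bar\<close>.\<close>

section \<open>Spectral radius and vanishing powers\<close>

lemma smult_pow_mat:
  fixes c :: "'a :: comm_semiring_1"
  assumes "A \<in> carrier_mat n n"
  shows "(c \<cdot>\<^sub>m A) ^\<^sub>m k = c ^ k \<cdot>\<^sub>m A ^\<^sub>m k"
proof (induction k)
  case 0
  show ?case using assms by (intro eq_matI) auto
next
  case (Suc k)
  have "(c \<cdot>\<^sub>m A) ^\<^sub>m Suc k = (c ^ k \<cdot>\<^sub>m A ^\<^sub>m k) * (c \<cdot>\<^sub>m A)"
    using Suc by simp
  also have "\<dots> = c ^ Suc k \<cdot>\<^sub>m A ^\<^sub>m Suc k"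
    using assms by (intro eq_matI) (auto simp: scalar_prod_def sum_distrib_left ac_simps)
  finally show ?case .
qed

lemma spectral_radius_smult_le:
  fixes K :: "complex mat"
  assumes K: "K \<in> carrier_mat n n" and n: "n > 0" and s: "s > 0"
  shows "spectral_radius (complex_of_real s \<cdot>\<^sub>m K) \<le> s * spectral_radius K"
proof -
  have sK: "complex_of_real s \<cdot>\<^sub>m K \<in> carrier_mat n n" using K by auto
  obtain l where l: "l \<in> spectrum (complex_of_real s \<cdot>\<^sub>m K)"
    and eq: "spectral_radius (complex_of_real s \<cdot>\<^sub>m K) = norm l"
    using spectral_radius_mem_max(1)[OF sK n] by auto
  then obtain v where v: "v \<in> carrier_vec n" "v \<noteq> 0\<^sub>v n"
    and ev: "(complex_of_real s \<cdot>\<^sub>m K) *\<^sub>v v = l \<cdot>\<^sub>v v"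
    unfolding spectrum_def eigenvalue_def eigenvector_def using sK by auto
  have "K *\<^sub>v v = (l / complex_of_real s) \<cdot>\<^sub>v v"
  proof (rule eq_vecI)
    fix i assume "i < dim_vec ((l / complex_of_real s) \<cdot>\<^sub>v v)"
    hence i: "i < n" using v by auto
    have "complex_of_real s * (K *\<^sub>v v) $ i = l * v $ i"
      using arg_cong[OF ev, of "\<lambda>x. x $ i"] i K v(1)
      by (simp add: scalar_prod_def sum_distrib_left mult.assoc)
    thus "(K *\<^sub>v v) $ i = ((l / complex_of_real s) \<cdot>\<^sub>v v) $ i"
      using i v s by (simp add: field_simps)
  qed (use K v in auto)
  hence "l / complex_of_real s \<in> spectrum K"
    unfolding spectrum_def eigenvalue_def eigenvector_def using K v by auto
  hence "norm (l / complex_of_real s) \<le> spectral_radius K"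
    using spectral_radius_mem_max(2)[OF K n] by blast
  hence "norm l / s \<le> spectral_radius K"
    using s by (simp add: norm_divide)
  thus ?thesis using eq s by (simp add: field_simps)
qed

definition powers_vanish :: "nat \<Rightarrow> real mat \<Rightarrow> bool" where
  "powers_vanish n N \<longleftrightarrow> (\<forall>r c. r < n \<longrightarrow> c < n \<longrightarrow> (\<lambda>t. (N ^\<^sub>m t) $$ (r,c)) \<longlonglongrightarrow> 0)"

text \<open>Scaling by \<open>1/q\<close> with \<open>rho N < q < 1\<close> keeps the spectral radius below 1, so the powers
  of the scaled matrix are bounded; hence \<open>N ^ t = O(q ^ t)\<close> entrywise.\<close>
lemma rho_less_1_imp_powers_vanish:
  assumes N: "N \<in> carrier_mat n n" and rho: "rho N < 1"
  shows "powers_vanish n N"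
  unfolding powers_vanish_def
proof (intro allI impI)
  fix r c assume r: "r < n" and c: "c < n"
  hence n: "n > 0" by simp
  define NC where "NC = map_mat complex_of_real N"
  have NC: "NC \<in> carrier_mat n n" using N by (auto simp: NC_def)
  have rho_nonneg: "0 \<le> rho N"
    using spectral_radius_mem_max(1)[OF NC n] by (auto simp: rho_def NC_def)
  define q where "q = (1 + rho N) / 2"
  have q: "rho N < q" "q < 1" "0 < q" using rho rho_nonneg by (auto simp: q_def)
  define K where "K = complex_of_real (1 / q) \<cdot>\<^sub>m NC"
  have K: "K \<in> carrier_mat n n" using NC by (simp add: K_def)
  have "spectral_radius K \<le> 1 / q * rho N"
    using spectral_radius_smult_le[OF NC n, of "1 / q"] q by (simp add: K_def rho_def NC_def)
  also have "\<dots> < 1" using q by (simp add: field_simps)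
  finally obtain b where b: "\<And>k. norm_bound (K ^\<^sub>m k) b"
    using spectral_radius_jnf_norm_bound_less_1_upper_triangular[OF K] by auto
  have bound: "norm ((N ^\<^sub>m t) $$ (r,c)) \<le> norm (q ^ t) * b" for t
  proof -
    have "K ^\<^sub>m t = complex_of_real ((1 / q) ^ t) \<cdot>\<^sub>m map_mat complex_of_real (N ^\<^sub>m t)"
      using smult_pow_mat[OF NC] by (simp add: K_def NC_def of_real_hom.mat_hom_pow[OF N])
    hence "norm ((K ^\<^sub>m t) $$ (r,c)) = \<bar>(N ^\<^sub>m t) $$ (r,c)\<bar> / q ^ t"
      using r c N q by (simp add: norm_divide norm_power power_one_over)
    moreover have "norm ((K ^\<^sub>m t) $$ (r,c)) \<le> b"
      using b[of t] r c K unfolding norm_bound_def by auto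
    ultimately have "\<bar>(N ^\<^sub>m t) $$ (r,c)\<bar> / q ^ t \<le> b" by simp
    thus ?thesis using q by (simp add: pos_divide_le_eq mult.commute)
  qed
  have "(\<lambda>t. q ^ t) \<longlonglongrightarrow> 0" using q by (intro LIMSEQ_power_zero) simp
  from tendsto_0_le[OF this always_eventually[OF allI[OF bound]]]
  show "(\<lambda>t. (N ^\<^sub>m t) $$ (r,c)) \<longlonglongrightarrow> 0" .
qed

section \<open>Nonnegative matrices and the Neumann series\<close>

definition nonneg_mat :: "nat \<Rightarrow> real mat \<Rightarrow> bool" where
  "nonneg_mat n N \<longleftrightarrow> (\<forall>r c. r < n \<longrightarrow> c < n \<longrightarrow> 0 \<le> N $$ (r,c))"

lemma nonneg_mat_mult:
  assumes "M \<in> carrier_mat n n" "N \<in> carrier_mat n n" "nonneg_mat n M" "nonneg_mat n N"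
  shows "nonneg_mat n (M * N)"
  using assms unfolding nonneg_mat_def
  by (auto simp: scalar_prod_def intro!: sum_nonneg mult_nonneg_nonneg)

lemma nonneg_mat_power:
  assumes N: "N \<in> carrier_mat n n" and "nonneg_mat n N"
  shows "nonneg_mat n (N ^\<^sub>m t)"
proof (induction t)
  case 0
  show ?case using N by (simp add: nonneg_mat_def)
next
  case (Suc t)
  thus ?case using assms nonneg_mat_mult[OF pow_carrier_mat[OF N] N] by simp
qed

lemma powers_vanish_mult_tendsto:
  assumes N: "N \<in> carrier_mat n n" and vanish: "powers_vanish n N"
    and Y: "Y \<in> carrier_mat n p" and r: "r < n" and c: "c < p"
  shows "(\<lambda>t. (N ^\<^sub>m t * Y) $$ (r,c)) \<longlonglongrightarrow> 0"
proof -
  have "(\<lambda>t. \<Sum>k<n. (N ^\<^sub>m t) $$ (r,k) * Y $$ (k,c)) \<longlonglongrightarrow> (\<Sum>k<n. 0 * Y $$ (k,c))"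
    using vanish r unfolding powers_vanish_def by (intro tendsto_sum tendsto_mult tendsto_const) auto
  thus ?thesis using N Y r c by (simp add: scalar_prod_def atLeast0LessThan)
qed

text \<open>A fixed point \<open>v = N v\<close> satisfies \<open>v = N ^ t v \<longrightarrow> 0\<close>.\<close>
lemma powers_vanish_one_minus_kernel:
  assumes N: "N \<in> carrier_mat n n" and vanish: "powers_vanish n N"
    and v: "v \<in> carrier_vec n" and kernel: "(1\<^sub>m n - N) *\<^sub>v v = 0\<^sub>v n"
  shows "v = 0\<^sub>v n"
proof -
  have "v - N *\<^sub>v v = 0\<^sub>v n"
    using kernel minus_mult_distrib_mat_vec[OF one_carrier_mat N v] v by simp
  hence fixed: "N *\<^sub>v v = v"
    using N v by (intro eq_vecI) (auto simp: vec_eq_iff)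
  have power_fixed: "(N ^\<^sub>m t) *\<^sub>v v = v" for t
  proof (induction t)
    case (Suc t)
    have "(N ^\<^sub>m Suc t) *\<^sub>v v = (N ^\<^sub>m t) *\<^sub>v (N *\<^sub>v v)"
      using assoc_mult_mat_vec[OF pow_carrier_mat[OF N] N v] by simp
    thus ?case using fixed Suc by simp
  qed (use N v in simp)
  show ?thesis
  proof (rule eq_vecI)
    fix i assume "i < dim_vec (0\<^sub>v n)"
    hence i: "i < n" by simp
    have "(\<lambda>t. (N ^\<^sub>m t * mat_of_cols n [v]) $$ (i,0)) \<longlonglongrightarrow> 0"
      using powers_vanish_mult_tendsto[OF N vanish mat_of_cols_carrier(1)[of n "[v]"] i] by simp
    moreover have "(N ^\<^sub>m t * mat_of_cols n [v]) $$ (i,0) = v $ i" for t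
      using arg_cong[OF power_fixed[of t], of "\<lambda>x. x $ i"] i N v
      by (simp add: scalar_prod_def mat_of_cols_def)
    ultimately show "v $ i = 0\<^sub>v n $ i" using i by (simp add: LIMSEQ_const_iff)
  qed (use v in simp)
qed

lemma powers_vanish_one_minus_invertible:
  assumes N: "N \<in> carrier_mat n n" and vanish: "powers_vanish n N"
  obtains X where "mat_inverse (1\<^sub>m n - N) = Some X"
proof -
  have IN: "1\<^sub>m n - N \<in> carrier_mat n n" using minus_carrier_mat[OF N] by blast
  have "det (1\<^sub>m n - N) \<noteq> 0"
    using det_0_iff_vec_prod_zero[OF IN] powers_vanish_one_minus_kernel[OF N vanish] by blast
  hence "1\<^sub>m n - N \<in> Units (ring_mat TYPE(real) n ())"
    by (rule det_non_zero_imp_unit[OF IN])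
  thus thesis using that mat_inverse(1)[OF IN, where b = "()"] by fastforce
qed

lemma neumann_partial_sum:
  fixes N Y :: "'a :: comm_ring_1 mat"
  assumes N: "N \<in> carrier_mat n n" and Y: "Y \<in> carrier_mat n n"
    and inv: "(1\<^sub>m n - N) * Y = 1\<^sub>m n" and r: "r < n" and c: "c < n"
  shows "(\<Sum>t<T. (N ^\<^sub>m t) $$ (r,c)) = Y $$ (r,c) - (N ^\<^sub>m T * Y) $$ (r,c)"
proof (induction T)
  case (Suc T)
  have P: "N ^\<^sub>m T \<in> carrier_mat n n" using N by simp
  have "N ^\<^sub>m T = N ^\<^sub>m T * ((1\<^sub>m n - N) * Y)" using inv right_mult_one_mat[OF P] by simp
  also have "\<dots> = (N ^\<^sub>m T * (1\<^sub>m n - N)) * Y"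
    using assoc_mult_mat[OF P minus_carrier_mat[OF N] Y] by simp
  also have "N ^\<^sub>m T * (1\<^sub>m n - N) = N ^\<^sub>m T - N ^\<^sub>m T * N"
    using mult_minus_distrib_mat[OF P one_carrier_mat N] right_mult_one_mat[OF P] by simp
  also have "(N ^\<^sub>m T - N ^\<^sub>m T * N) * Y = N ^\<^sub>m T * Y - N ^\<^sub>m Suc T * Y"
    using minus_mult_distrib_mat[OF P mult_carrier_mat[OF P N] Y] by simp
  finally have "(N ^\<^sub>m T) $$ (r,c) = (N ^\<^sub>m T * Y - N ^\<^sub>m Suc T * Y) $$ (r,c)"
    by (rule arg_cong)
  thus ?case using Suc N Y r c by (simp del: index_mult_mat(1))
qed (use N Y r c in simp)

lemma neumann_inverse_nonneg:
  assumes N: "N \<in> carrier_mat n n" and nonneg: "nonneg_mat n N" and vanish: "powers_vanish n N"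
    and Y: "Y \<in> carrier_mat n n" and inv: "(1\<^sub>m n - N) * Y = 1\<^sub>m n"
  shows "nonneg_mat n Y"
  unfolding nonneg_mat_def
proof (intro allI impI)
  fix r c assume r: "r < n" and c: "c < n"
  have "(N ^\<^sub>m T * Y) $$ (r,c) \<le> Y $$ (r,c)" for T
  proof -
    have "0 \<le> (\<Sum>t<T. (N ^\<^sub>m t) $$ (r,c))"
      using nonneg_mat_power[OF N nonneg] r c unfolding nonneg_mat_def by (simp add: sum_nonneg)
    thus ?thesis using neumann_partial_sum[OF N Y inv r c, of T] by simp
  qed
  thus "0 \<le> Y $$ (r,c)"
    using LIMSEQ_le_const2[OF powers_vanish_mult_tendsto[OF N vanish Y r c]] by blast
qed

lemma neumann_partial_sum_le_inverse:
  assumes N: "N \<in> carrier_mat n n" and nonneg: "nonneg_mat n N" and vanish: "powers_vanish n N"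
    and Y: "Y \<in> carrier_mat n n" and inv: "(1\<^sub>m n - N) * Y = 1\<^sub>m n"
    and r: "r < n" and c: "c < n"
  shows "(\<Sum>t<T. (N ^\<^sub>m t) $$ (r,c)) \<le> Y $$ (r,c)"
proof -
  have "nonneg_mat n (N ^\<^sub>m T * Y)"
    using nonneg_mat_mult[OF pow_carrier_mat[OF N] Y nonneg_mat_power[OF N nonneg]]
      neumann_inverse_nonneg[OF N nonneg vanish Y inv] by blast
  thus ?thesis using neumann_partial_sum[OF N Y inv r c, of T] r c
    unfolding nonneg_mat_def by simp
qed

section \<open>Diagonals of Gramians\<close>

lemma gramian_diag:
  fixes P Q :: "real mat"
  assumes P: "P \<in> carrier_mat n p" and Q: "Q \<in> carrier_mat p m" and k: "k < n"
  shows "(P * Q * Q\<^sup>T * P\<^sup>T) $$ (k,k) = (\<Sum>l<m. ((P * Q) $$ (k,l))\<^sup>2)"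
proof -
  have "P * Q * Q\<^sup>T * P\<^sup>T = (P * Q) * (Q\<^sup>T * P\<^sup>T)"
    using P Q by (intro assoc_mult_mat) auto
  also have "Q\<^sup>T * P\<^sup>T = (P * Q)\<^sup>T" using transpose_mult[OF P Q] by simp
  finally show ?thesis
    using P Q k by (simp add: scalar_prod_def atLeast0LessThan power2_eq_square)
qed

lemma gramian_diag_nonneg:
  fixes P Q :: "real mat"
  assumes "P \<in> carrier_mat n p" and "Q \<in> carrier_mat p m" and "k < n"
  shows "0 \<le> (P * Q * Q\<^sup>T * P\<^sup>T) $$ (k,k)"
  using gramian_diag[OF assms] by (simp add: sum_nonneg)

lemma abs_mat_power_le:
  fixes Z N :: "real mat"
  assumes Z: "Z \<in> carrier_mat n n" and N: "N \<in> carrier_mat n n" and nonneg: "nonneg_mat n N"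
    and le: "\<And>r c. r < n \<Longrightarrow> c < n \<Longrightarrow> \<bar>Z $$ (r,c)\<bar> \<le> N $$ (r,c)"
    and r: "r < n" and c: "c < n"
  shows "\<bar>(Z ^\<^sub>m t) $$ (r,c)\<bar> \<le> (N ^\<^sub>m t) $$ (r,c)"
  using c
proof (induction t arbitrary: c)
  case 0
  thus ?case using Z N r by simp
next
  case (Suc t)
  have "\<bar>(Z ^\<^sub>m Suc t) $$ (r,c)\<bar> = \<bar>\<Sum>k<n. (Z ^\<^sub>m t) $$ (r,k) * Z $$ (k,c)\<bar>"
    using Suc.prems r Z by (simp add: scalar_prod_def atLeast0LessThan)
  also have "\<dots> \<le> (\<Sum>k<n. \<bar>(Z ^\<^sub>m t) $$ (r,k)\<bar> * \<bar>Z $$ (k,c)\<bar>)"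
    by (rule order_trans[OF sum_abs]) (simp add: abs_mult)
  also have "\<dots> \<le> (\<Sum>k<n. (N ^\<^sub>m t) $$ (r,k) * N $$ (k,c))"
    using Suc le nonneg_mat_power[OF N nonneg, of t] r unfolding nonneg_mat_def
    by (intro sum_mono mult_mono) auto
  also have "\<dots> = (N ^\<^sub>m Suc t) $$ (r,c)"
    using Suc.prems r N by (simp add: scalar_prod_def atLeast0LessThan)
  finally show ?case .
qed

lemma sum_power2_le_power2_sum:
  fixes a :: "'a \<Rightarrow> 'b :: linordered_semidom"
  assumes "\<And>t. t \<in> A \<Longrightarrow> 0 \<le> a t"
  shows "(\<Sum>t\<in>A. (a t)\<^sup>2) \<le> (\<Sum>t\<in>A. a t)\<^sup>2"
  using assms
proof (induction A rule: infinite_finite_induct)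
  case (insert x F)
  have "(\<Sum>t\<in>insert x F. (a t)\<^sup>2) \<le> (a x)\<^sup>2 + (sum a F)\<^sup>2"
    using insert by simp
  also have "\<dots> \<le> (a x + sum a F)\<^sup>2"
    using insert by (simp add: power2_sum sum_nonneg)
  finally show ?case using insert by simp
qed auto

text \<open>Termwise \<open>\<bar>(Z\<^sup>t B)\<^sub>k\<^sub>l\<bar> \<le> (N\<^sup>t \<bar>B\<bar>)\<^sub>k\<^sub>l\<close>; a sum of squares of nonnegative terms is at most
  the square of their sum, and the partial sums of \<open>N\<^sup>t\<close> are at most \<open>Y\<close>.\<close>
lemma gramian_partial_sum_diag_le:
  fixes Z N Y B :: "real mat"
  assumes Z: "Z \<in> carrier_mat n n" and N: "N \<in> carrier_mat n n" and nonneg: "nonneg_mat n N"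
    and le: "\<And>r c. r < n \<Longrightarrow> c < n \<Longrightarrow> \<bar>Z $$ (r,c)\<bar> \<le> N $$ (r,c)"
    and Y: "Y \<in> carrier_mat n n"
    and neumann: "\<And>r c. r < n \<Longrightarrow> c < n \<Longrightarrow> (\<Sum>t<T. (N ^\<^sub>m t) $$ (r,c)) \<le> Y $$ (r,c)"
    and B: "B \<in> carrier_mat n m" and k: "k < n"
  shows "(\<Sum>t<T. (Z ^\<^sub>m t * B * B\<^sup>T * (Z ^\<^sub>m t)\<^sup>T) $$ (k,k))
     \<le> (Y * abs_mat B * (abs_mat B)\<^sup>T * Y\<^sup>T) $$ (k,k)"
proof -
  define b where "b r l = \<bar>B $$ (r,l)\<bar>" for r l
  define v where "v t l = (\<Sum>r<n. (N ^\<^sub>m t) $$ (k,r) * b r l)" for t l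
  have v_nonneg: "0 \<le> v t l" for t l
    using nonneg_mat_power[OF N nonneg, of t] k unfolding v_def b_def nonneg_mat_def
    by (intro sum_nonneg mult_nonneg_nonneg) auto
  have row_le: "\<bar>(Z ^\<^sub>m t * B) $$ (k,l)\<bar> \<le> v t l" if l: "l < m" for t l
  proof -
    have "\<bar>(Z ^\<^sub>m t * B) $$ (k,l)\<bar> = \<bar>\<Sum>r<n. (Z ^\<^sub>m t) $$ (k,r) * B $$ (r,l)\<bar>"
      using Z B k l by (simp add: scalar_prod_def atLeast0LessThan)
    also have "\<dots> \<le> (\<Sum>r<n. \<bar>(Z ^\<^sub>m t) $$ (k,r)\<bar> * b r l)"
      unfolding b_def by (rule order_trans[OF sum_abs]) (simp add: abs_mult)
    also have "\<dots> \<le> v t l"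
      unfolding v_def b_def using abs_mat_power_le[OF Z N nonneg le k]
      by (intro sum_mono mult_right_mono) auto
    finally show ?thesis .
  qed
  have sum_v_le: "(\<Sum>t<T. v t l) \<le> (Y * abs_mat B) $$ (k,l)" if l: "l < m" for l
  proof -
    have "(\<Sum>t<T. v t l) = (\<Sum>r<n. (\<Sum>t<T. (N ^\<^sub>m t) $$ (k,r)) * b r l)"
      unfolding v_def by (subst sum.swap) (simp add: sum_distrib_right)
    also have "\<dots> \<le> (\<Sum>r<n. Y $$ (k,r) * b r l)"
      using neumann k unfolding b_def by (intro sum_mono mult_right_mono) auto
    also have "\<dots> = (Y * abs_mat B) $$ (k,l)"
      using Y B k l by (simp add: abs_mat_def b_def scalar_prod_def atLeast0LessThan)
    finally show ?thesis .
  qed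
  have "(\<Sum>t<T. (Z ^\<^sub>m t * B * B\<^sup>T * (Z ^\<^sub>m t)\<^sup>T) $$ (k,k))
      = (\<Sum>t<T. \<Sum>l<m. ((Z ^\<^sub>m t * B) $$ (k,l))\<^sup>2)"
    using gramian_diag[OF pow_carrier_mat[OF Z] B k] by simp
  also have "\<dots> \<le> (\<Sum>t<T. \<Sum>l<m. (v t l)\<^sup>2)"
    using row_le by (intro sum_mono) (metis abs_le_square_iff abs_of_nonneg v_nonneg lessThan_iff)
  also have "\<dots> = (\<Sum>l<m. \<Sum>t<T. (v t l)\<^sup>2)"
    by (rule sum.swap)
  also have "\<dots> \<le> (\<Sum>l<m. (\<Sum>t<T. v t l)\<^sup>2)"
    using v_nonneg by (intro sum_mono sum_power2_le_power2_sum)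
  also have "\<dots> \<le> (\<Sum>l<m. ((Y * abs_mat B) $$ (k,l))\<^sup>2)"
    using sum_v_le v_nonneg by (intro sum_mono power_mono sum_nonneg) auto
  also have "\<dots> = (Y * abs_mat B * (abs_mat B)\<^sup>T * Y\<^sup>T) $$ (k,k)"
    using gramian_diag[OF Y _ k, of "abs_mat B" m] B by (simp add: abs_mat_def)
  finally show ?thesis .
qed

lemma abs_mat_carrier [simp]:
  "A \<in> carrier_mat nr nc \<Longrightarrow> abs_mat A \<in> carrier_mat nr nc"
  "dim_row (abs_mat A) = dim_row A" "dim_col (abs_mat A) = dim_col A"
  by (simp_all add: abs_mat_def)

lemma index_abs_mat [simp]:
  "r < dim_row A \<Longrightarrow> c < dim_col A \<Longrightarrow> abs_mat A $$ (r,c) = \<bar>A $$ (r,c)\<bar>"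
  by (simp add: abs_mat_def)

lemma nonneg_mat_abs_mat: "A \<in> carrier_mat n n \<Longrightarrow> nonneg_mat n (abs_mat A)"
  by (simp add: nonneg_mat_def)

lemma Xmat_inverse:
  assumes A: "A \<in> carrier_mat n n" and rho: "rho (abs_mat A) < 1"
  shows "Xmat A \<in> carrier_mat n n" and "(1\<^sub>m n - abs_mat A) * Xmat A = 1\<^sub>m n"
proof -
  have M: "abs_mat A \<in> carrier_mat n n" using A by simp
  obtain X where X: "mat_inverse (1\<^sub>m n - abs_mat A) = Some X"
    using powers_vanish_one_minus_invertible[OF M rho_less_1_imp_powers_vanish[OF M rho]] .
  have "Xmat A = X" using A X by (simp add: Xmat_def)
  thus "Xmat A \<in> carrier_mat n n" and "(1\<^sub>m n - abs_mat A) * Xmat A = 1\<^sub>m n"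
    using mat_inverse(2)[OF minus_carrier_mat[OF M] X] by auto
qed

lemma Xmat_nonneg:
  assumes A: "A \<in> carrier_mat n n" and rho: "rho (abs_mat A) < 1"
  shows "nonneg_mat n (Xmat A)"
  using neumann_inverse_nonneg[OF _ nonneg_mat_abs_mat[OF A] rho_less_1_imp_powers_vanish
      Xmat_inverse[OF A rho]] A rho by simp

lemma gramian_series_diag_le_Hmat:
  assumes A: "A \<in> carrier_mat n n" and B: "B \<in> carrier_mat n m"
    and rho: "rho (abs_mat A) < 1" and k: "k < n"
  defines "d \<equiv> \<lambda>t. (A ^\<^sub>m t * B * B\<^sup>T * (A ^\<^sub>m t)\<^sup>T) $$ (k,k)"
  shows "summable d" and "suminf d \<le> Hmat A B $$ (k,k)"
proof -
  have M: "abs_mat A \<in> carrier_mat n n" using A by simp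
  have nonneg: "nonneg_mat n (abs_mat A)" using A by (rule nonneg_mat_abs_mat)
  note vanish = rho_less_1_imp_powers_vanish[OF M rho]
  note X = Xmat_inverse[OF A rho]
  have d_nonneg: "0 \<le> d t" for t
    unfolding d_def by (rule gramian_diag_nonneg[OF pow_carrier_mat[OF A] B k])
  have partial_le: "(\<Sum>t<T. d t) \<le> Hmat A B $$ (k,k)" for T
    unfolding d_def Hmat_def
    using gramian_partial_sum_diag_le[OF A M nonneg _ X(1) _ B k]
      neumann_partial_sum_le_inverse[OF M nonneg vanish X] A
    by simp
  show "summable d" using d_nonneg partial_le by (intro summableI_nonneg_bounded) auto
  thus "suminf d \<le> Hmat A B $$ (k,k)" using partial_le by (intro suminf_le_const)
qed

lemma tr_W_fin_le_tr_W_inf: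
  assumes "A \<in> carrier_mat n n" and "B \<in> carrier_mat n m" and "rho (abs_mat A) < 1"
  shows "tr (W_fin T A B) \<le> tr (W_inf A B)"
proof -
  have "(\<Sum>t<T. (A ^\<^sub>m t * B * B\<^sup>T * (A ^\<^sub>m t)\<^sup>T) $$ (k,k))
      \<le> (\<Sum>t. (A ^\<^sub>m t * B * B\<^sup>T * (A ^\<^sub>m t)\<^sup>T) $$ (k,k))" if "k < n" for k
    using gramian_series_diag_le_Hmat(1)[OF assms that]
      gramian_diag_nonneg[OF pow_carrier_mat[OF assms(1)] assms(2) that]
    by (intro sum_le_suminf) auto
  thus ?thesis
    using assms(1) by (simp add: tr_def W_fin_def W_inf_def del: index_mult_mat(1))
      (meson lessThan_iff sum_mono)
qed

lemma tr_W_inf_le_tr_Hmat: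
  assumes "A \<in> carrier_mat n n" and "B \<in> carrier_mat n m" and "rho (abs_mat A) < 1"
  shows "tr (W_inf A B) \<le> tr (Hmat A B)"
  using gramian_series_diag_le_Hmat(2)[OF assms] assms(1) Xmat_inverse(1)[OF assms(1,3)]
  by (simp add: tr_def W_inf_def Hmat_def del: index_mult_mat(1)) (meson lessThan_iff sum_mono)

lemma Hmat_diag:
  assumes A: "A \<in> carrier_mat n n" and B: "B \<in> carrier_mat n m"
    and rho: "rho (abs_mat A) < 1" and k: "k < n"
  shows "Hmat A B $$ (k,k) = (\<Sum>l<m. ((Xmat A * abs_mat B) $$ (k,l))\<^sup>2)"
  using gramian_diag[OF Xmat_inverse(1)[OF A rho] _ k, of "abs_mat B" m] B by (simp add: Hmat_def)

lemma tr_Hmat: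
  assumes A: "A \<in> carrier_mat n n" and B: "B \<in> carrier_mat n m" and rho: "rho (abs_mat A) < 1"
  shows "tr (Hmat A B) = (\<Sum>k<n. \<Sum>l<m. ((Xmat A * abs_mat B) $$ (k,l))\<^sup>2)"
  using Xmat_inverse(1)[OF A rho] Hmat_diag[OF A B rho]
  by (simp add: tr_def Hmat_def del: index_mult_mat(1))

section \<open>Rank-one updates\<close>

lemma unit_outer_carrier [simp]:
  "unit_outer n j i \<in> carrier_mat n n" "dim_row (unit_outer n j i) = n" "dim_col (unit_outer n j i) = n"
  by (simp_all add: unit_outer_def)

lemma index_unit_outer [simp]:
  "r < n \<Longrightarrow> c < n \<Longrightarrow> unit_outer n j i $$ (r,c) = (if r = j \<and> c = i then 1 else 0)"
  by (simp add: unit_outer_def)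

lemma rank_one_update_mult:
  fixes M X :: "real mat"
  assumes M: "M \<in> carrier_mat n n" and X: "X \<in> carrier_mat n n" and inv: "(1\<^sub>m n - M) * X = 1\<^sub>m n"
    and i: "i < n" and r: "r < n" and q: "q < n"
  shows "((1\<^sub>m n - (M + s \<cdot>\<^sub>m unit_outer n j i)) * X) $$ (r,q)
    = (if r = q then 1 else 0) - (if r = j then s * X $$ (i,q) else 0)"
proof -
  have "((1\<^sub>m n - (M + s \<cdot>\<^sub>m unit_outer n j i)) * X) $$ (r,q)
      = (\<Sum>k<n. ((1\<^sub>m n - M) $$ (r,k) - (if r = j \<and> k = i then s else 0)) * X $$ (k,q))"
    using M X r q by (simp add: scalar_prod_def atLeast0LessThan diff_diff_eq) (auto intro!: sum.cong)
  also have "\<dots> = (\<Sum>k<n. (1\<^sub>m n - M) $$ (r,k) * X $$ (k,q))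
      - (\<Sum>k<n. (if r = j \<and> k = i then s else 0) * X $$ (k,q))"
    by (simp add: left_diff_distrib sum_subtractf)
  also have "(\<Sum>k<n. (1\<^sub>m n - M) $$ (r,k) * X $$ (k,q)) = (if r = q then 1 else 0)"
    using arg_cong[OF inv, of "\<lambda>Z. Z $$ (r,q)"] M X r q by (simp add: scalar_prod_def atLeast0LessThan)
  also have "(\<Sum>k<n. (if r = j \<and> k = i then s else 0) * X $$ (k,q)) = (if r = j then s * X $$ (i,q) else 0)"
    using i by (simp add: if_distrib[of "\<lambda>x. x * _"] sum.If_cases)
  finally show ?thesis .
qed

text \<open>The Sherman--Morrison matrix \<open>X + c X e\<^sub>j e\<^sub>i\<^sup>T X\<close>.\<close>
definition sherman_morrison :: "nat \<Rightarrow> real mat \<Rightarrow> real \<Rightarrow> nat \<Rightarrow> nat \<Rightarrow> real mat" where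
  "sherman_morrison n X c i j = mat n n (\<lambda>(r,q). X $$ (r,q) + c * X $$ (r,j) * X $$ (i,q))"

lemma sherman_morrison_unit_outer:
  fixes M X :: "real mat"
  assumes M: "M \<in> carrier_mat n n" and X: "X \<in> carrier_mat n n" and inv: "(1\<^sub>m n - M) * X = 1\<^sub>m n"
    and i: "i < n" and j: "j < n" and den: "1 - s * X $$ (i,j) \<noteq> 0"
  shows "(1\<^sub>m n - (M + s \<cdot>\<^sub>m unit_outer n j i)) * sherman_morrison n X (s / (1 - s * X $$ (i,j))) i j = 1\<^sub>m n"
proof (rule eq_matI)
  fix r q assume "r < dim_row (1\<^sub>m n :: real mat)" "q < dim_col (1\<^sub>m n :: real mat)"
  hence r: "r < n" and q: "q < n" by auto
  define c where "c = s / (1 - s * X $$ (i,j))"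
  define L where "L = 1\<^sub>m n - (M + s \<cdot>\<^sub>m unit_outer n j i)"
  have L: "L \<in> carrier_mat n n" unfolding L_def by (intro minus_carrier_mat add_carrier_mat) simp
  have LX: "(L * X) $$ (r,q') = (if r = q' then 1 else 0) - (if r = j then s * X $$ (i,q') else 0)"
    if "q' < n" for q'
    unfolding L_def using rank_one_update_mult[OF M X inv i r that] .
  have "(L * sherman_morrison n X c i j) $$ (r,q)
      = (\<Sum>k<n. L $$ (r,k) * X $$ (k,q) + c * X $$ (i,q) * (L $$ (r,k) * X $$ (k,j)))"
    using L X r q j
    by (simp add: sherman_morrison_def scalar_prod_def atLeast0LessThan distrib_left mult_ac)
  also have "\<dots> = (L * X) $$ (r,q) + c * X $$ (i,q) * (L * X) $$ (r,j)"
    using L X r q j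
    by (simp add: scalar_prod_def atLeast0LessThan sum.distrib sum_distrib_left)
  also have "\<dots> = (if r = q then 1 else 0)"
    using den by (simp add: LX q j c_def field_simps)
  finally show "(L * sherman_morrison n X c i j) $$ (r,q) = 1\<^sub>m n $$ (r,q)" using r q by simp
qed (simp_all add: sherman_morrison_def)

text \<open>Otherwise column \<open>j\<close> of \<open>X\<close> would lie in the kernel of \<open>1 - (M + s e\<^sub>j e\<^sub>i\<^sup>T)\<close>.\<close>
lemma rank_one_update_denominator_nonzero:
  fixes M X :: "real mat"
  assumes M: "M \<in> carrier_mat n n" and X: "X \<in> carrier_mat n n" and inv: "(1\<^sub>m n - M) * X = 1\<^sub>m n"
    and i: "i < n" and j: "j < n" and vanish: "powers_vanish n (M + s \<cdot>\<^sub>m unit_outer n j i)"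
  shows "1 - s * X $$ (i,j) \<noteq> 0"
proof
  assume den0: "1 - s * X $$ (i,j) = 0"
  define M' where "M' = M + s \<cdot>\<^sub>m unit_outer n j i"
  have M': "M' \<in> carrier_mat n n" unfolding M'_def by (intro add_carrier_mat) (simp_all add: M)
  have "(1\<^sub>m n - M') *\<^sub>v col X j = 0\<^sub>v n"
  proof (rule eq_vecI)
    fix r assume "r < dim_vec (0\<^sub>v n :: real vec)"
    hence r: "r < n" by simp
    have "((1\<^sub>m n - M') *\<^sub>v col X j) $ r = ((1\<^sub>m n - M') * X) $$ (r,j)"
      using r j M' X by simp
    also have "\<dots> = 0"
      using rank_one_update_mult[OF M X inv i r j] den0 by (simp add: M'_def)
    finally show "((1\<^sub>m n - M') *\<^sub>v col X j) $ r = 0\<^sub>v n $ r" using r by simp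
  qed (use M' in simp)
  hence "col X j = 0\<^sub>v n"
    using powers_vanish_one_minus_kernel[OF M' vanish[folded M'_def]] X j by simp
  hence "((1\<^sub>m n - M) * X) $$ (j,j) = 0"
    using M X j by (simp add: index_mult_mat(1) scalar_prod_def del: col_def)
  thus False using inv j by simp
qed

text \<open>The Sherman--Morrison matrix inverts \<open>1 - (M + s e\<^sub>j e\<^sub>i\<^sup>T)\<close>, so it is nonnegative, and its
  \<open>(i,j)\<close> entry is \<open>X\<^sub>i\<^sub>j / (1 - s X\<^sub>i\<^sub>j)\<close>.\<close>
lemma rank_one_update_denominator_pos:
  fixes M X :: "real mat"
  assumes M: "M \<in> carrier_mat n n" and X: "X \<in> carrier_mat n n" and inv: "(1\<^sub>m n - M) * X = 1\<^sub>m n"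
    and X_nonneg: "nonneg_mat n X" and i: "i < n" and j: "j < n"
    and nonneg: "nonneg_mat n (M + s \<cdot>\<^sub>m unit_outer n j i)"
    and vanish: "powers_vanish n (M + s \<cdot>\<^sub>m unit_outer n j i)"
  shows "0 < 1 - s * X $$ (i,j)"
proof -
  have M': "M + s \<cdot>\<^sub>m unit_outer n j i \<in> carrier_mat n n" by (intro add_carrier_mat) (simp_all add: M)
  note den = rank_one_update_denominator_nonzero[OF M X inv i j vanish]
  define c where "c = s / (1 - s * X $$ (i,j))"
  have "nonneg_mat n (sherman_morrison n X c i j)"
    using neumann_inverse_nonneg[OF M' nonneg vanish] sherman_morrison_unit_outer[OF M X inv i j den]
    by (simp add: c_def sherman_morrison_def)
  hence "0 \<le> X $$ (i,j) + c * X $$ (i,j) * X $$ (i,j)"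
    using i j unfolding nonneg_mat_def by (simp add: sherman_morrison_def)
  also have "X $$ (i,j) + c * X $$ (i,j) * X $$ (i,j) = X $$ (i,j) / (1 - s * X $$ (i,j))"
    using den by (simp add: c_def field_simps)
  finally have "0 \<le> X $$ (i,j) / (1 - s * X $$ (i,j))" .
  moreover have "0 \<le> X $$ (i,j)" using X_nonneg i j unfolding nonneg_mat_def by simp
  ultimately show ?thesis using den by (cases "X $$ (i,j) = 0") (auto simp: zero_le_divide_iff)
qed

lemma sherman_morrison_mult:
  fixes X P :: "real mat"
  assumes X: "X \<in> carrier_mat n n" and P: "P \<in> carrier_mat n m"
    and k: "k < n" and l: "l < m" and i: "i < n" and j: "j < n"
  shows "(sherman_morrison n X c i j * P) $$ (k,l) = (X * P) $$ (k,l) + c * X $$ (k,j) * (X * P) $$ (i,l)"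
  using X P k l i j
  by (simp add: sherman_morrison_def scalar_prod_def atLeast0LessThan ring_distribs sum.distrib
      sum_distrib_left mult_ac)

lemma abs_mat_rank_one_update:
  assumes A: "A \<in> carrier_mat n n" and rho': "rho (abs_mat A + \<bar>w\<bar> \<cdot>\<^sub>m unit_outer n j i) < 1"
  defines "M' \<equiv> abs_mat A + \<bar>w\<bar> \<cdot>\<^sub>m unit_outer n j i"
  shows "M' \<in> carrier_mat n n" and "nonneg_mat n M'" and "powers_vanish n M'"
    and "\<And>r q. r < n \<Longrightarrow> q < n \<Longrightarrow> \<bar>(A + w \<cdot>\<^sub>m unit_outer n j i) $$ (r,q)\<bar> \<le> M' $$ (r,q)"
proof -
  show M': "M' \<in> carrier_mat n n" unfolding M'_def by (intro add_carrier_mat) (simp_all add: A)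
  show "nonneg_mat n M'" using A by (simp add: nonneg_mat_def M'_def)
  show "powers_vanish n M'" using rho_less_1_imp_powers_vanish[OF M'] rho' by (simp add: M'_def)
  show "\<bar>(A + w \<cdot>\<^sub>m unit_outer n j i) $$ (r,q)\<bar> \<le> M' $$ (r,q)" if "r < n" "q < n" for r q
    using that A by (simp add: M'_def abs_triangle_ineq)
qed

lemma Xmat_rank_one_denominator_pos:
  assumes A: "A \<in> carrier_mat n n" and rho: "rho (abs_mat A) < 1" and i: "i < n" and j: "j < n"
    and rho': "rho (abs_mat A + \<bar>w\<bar> \<cdot>\<^sub>m unit_outer n j i) < 1"
  shows "0 < 1 - \<bar>w\<bar> * Xmat A $$ (i,j)"
  using rank_one_update_denominator_pos[OF _ Xmat_inverse[OF A rho] Xmat_nonneg[OF A rho] i j]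
    abs_mat_rank_one_update[OF A rho'] A by simp

lemma tr_W_fin_rank_one_update_le:
  assumes A: "A \<in> carrier_mat n n" and B: "B \<in> carrier_mat n m"
    and rho: "rho (abs_mat A) < 1" and i: "i < n" and j: "j < n"
    and rho': "rho (abs_mat A + \<bar>w\<bar> \<cdot>\<^sub>m unit_outer n j i) < 1"
  defines "X \<equiv> Xmat A" and "G \<equiv> Xmat A * abs_mat B" and "c \<equiv> alpha_pq A w i j"
  shows "tr (W_fin T (A + w \<cdot>\<^sub>m unit_outer n j i) B)
    \<le> (\<Sum>k<n. \<Sum>l<m. (G $$ (k,l) + c * X $$ (k,j) * G $$ (i,l))\<^sup>2)"
proof -
  define M' where "M' = abs_mat A + \<bar>w\<bar> \<cdot>\<^sub>m unit_outer n j i"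
  define A' where "A' = A + w \<cdot>\<^sub>m unit_outer n j i"
  note M' = abs_mat_rank_one_update[OF A rho', folded M'_def A'_def]
  have A': "A' \<in> carrier_mat n n" unfolding A'_def by (intro add_carrier_mat) (simp_all add: A)
  note X = Xmat_inverse[OF A rho, folded X_def]
  define Y where "Y = sherman_morrison n X c i j"
  have Y: "Y \<in> carrier_mat n n" by (simp add: Y_def sherman_morrison_def)
  have Y_inv: "(1\<^sub>m n - M') * Y = 1\<^sub>m n"
    using sherman_morrison_unit_outer[OF _ X i j] Xmat_rank_one_denominator_pos[OF A rho i j rho'] A
    by (simp add: Y_def M'_def c_def alpha_pq_def X_def)
  have "(\<Sum>t<T. (A' ^\<^sub>m t * B * B\<^sup>T * (A' ^\<^sub>m t)\<^sup>T) $$ (k,k))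
      \<le> (\<Sum>l<m. (G $$ (k,l) + c * X $$ (k,j) * G $$ (i,l))\<^sup>2)" if k: "k < n" for k
  proof -
    have "(\<Sum>t<T. (A' ^\<^sub>m t * B * B\<^sup>T * (A' ^\<^sub>m t)\<^sup>T) $$ (k,k))
        \<le> (Y * abs_mat B * (abs_mat B)\<^sup>T * Y\<^sup>T) $$ (k,k)"
      by (rule gramian_partial_sum_diag_le[OF A' M'(1,2,4) Y
            neumann_partial_sum_le_inverse[OF M'(1-3) Y Y_inv] B k])
    also have "\<dots> = (\<Sum>l<m. ((Y * abs_mat B) $$ (k,l))\<^sup>2)"
      using gramian_diag[OF Y _ k, of "abs_mat B" m] B by simp
    also have "\<dots> = (\<Sum>l<m. (G $$ (k,l) + c * X $$ (k,j) * G $$ (i,l))\<^sup>2)"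
      using sherman_morrison_mult[OF X(1) _ k _ i j, of "abs_mat B" m] B
      by (simp add: Y_def G_def X_def)
    finally show ?thesis .
  qed
  thus ?thesis
    using A' by (simp add: tr_def W_fin_def A'_def[symmetric] del: index_mult_mat(1))
      (meson lessThan_iff sum_mono)
qed

section \<open>Scalar estimates\<close>

text \<open>From \<open>x + sqrt (x\<^sup>2 + U) \<le> \<beta>\<close> we get \<open>U \<le> \<beta> (\<beta> - 2 x)\<close>; then
  \<open>2 P \<le> 2 sqrt ((\<beta> - 2 x) a \<cdot> \<beta> S) \<le> (\<beta> - 2 x) a + \<beta> S\<close> by AM-GM.\<close>
lemma cross_term_scalar_le:
  fixes a S P U x \<beta> :: real
  assumes a: "0 \<le> a" and S: "0 \<le> S" and U: "0 \<le> U" and P: "P\<^sup>2 \<le> a * U * S"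
    and \<beta>1: "2 * x \<le> \<beta>" and \<beta>2: "x + sqrt (x\<^sup>2 + U) \<le> \<beta>"
  shows "2 * (x * a + P) \<le> \<beta> * (a + S)"
proof -
  define L where "L = sqrt (x\<^sup>2 + U)"
  have x_le_L: "\<bar>x\<bar> \<le> L"
    unfolding L_def using U by (metis real_sqrt_abs real_sqrt_le_mono le_add_same_cancel1)
  have L_le: "L \<le> \<beta> - x" using \<beta>2 by (simp add: L_def)
  have \<beta>: "0 \<le> \<beta>" using x_le_L L_le by linarith
  have "x\<^sup>2 + U = L\<^sup>2" using U by (simp add: L_def)
  also have "\<dots> \<le> (\<beta> - x)\<^sup>2" using x_le_L L_le by (intro power_mono) auto
  finally have U_le: "U \<le> \<beta> * (\<beta> - 2 * x)" by (simp add: power2_eq_square algebra_simps)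
  define Q where "Q = (\<beta> - 2 * x) * a + \<beta> * S"
  have Q: "0 \<le> Q" unfolding Q_def using \<beta>1 \<beta> a S by simp
  have "(2 * P)\<^sup>2 \<le> 4 * (U * (a * S))" using P by (simp add: power_mult_distrib mult_ac)
  also have "\<dots> \<le> 4 * ((\<beta> * (\<beta> - 2 * x)) * (a * S))"
    using U_le a S by (intro mult_left_mono mult_right_mono) auto
  also have "\<dots> \<le> Q\<^sup>2"
    unfolding Q_def using sum_squares_ge_zero[of "(\<beta> - 2 * x) * a - \<beta> * S" 0]
    by (simp add: power2_eq_square algebra_simps)
  finally have "2 * P \<le> Q" using Q by (rule power2_le_imp_le)
  thus ?thesis unfolding Q_def by (simp add: algebra_simps)
qed

text \<open>Split off the row \<open>i\<close> and apply Cauchy--Schwarz twice to the remaining rows.\<close>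
lemma cross_term_le:
  fixes G :: "nat \<Rightarrow> nat \<Rightarrow> real" and u :: "nat \<Rightarrow> real"
  assumes i: "i < n" and \<beta>1: "2 * u i \<le> \<beta>" and \<beta>2: "u i + sqrt (\<Sum>k<n. (u k)\<^sup>2) \<le> \<beta>"
  shows "2 * (\<Sum>k<n. \<Sum>l<m. G k l * u k * G i l) \<le> \<beta> * (\<Sum>k<n. \<Sum>l<m. (G k l)\<^sup>2)"
proof -
  define K where "K = {..<n} - {i}"
  have split: "{..<n} = insert i K" "i \<notin> K" "finite K" using i by (auto simp: K_def)
  define a where "a = (\<Sum>l<m. (G i l)\<^sup>2)"
  define S where "S = (\<Sum>k\<in>K. \<Sum>l<m. (G k l)\<^sup>2)"
  define U where "U = (\<Sum>k\<in>K. (u k)\<^sup>2)"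
  define z where "z l = (\<Sum>k\<in>K. u k * G k l)" for l
  define P where "P = (\<Sum>l<m. G i l * z l)"
  have cross: "(\<Sum>k<n. \<Sum>l<m. G k l * u k * G i l) = u i * a + P"
    unfolding split(1) a_def P_def z_def using split(2,3)
    by (simp add: sum.swap[of _ K] sum_distrib_left power2_eq_square mult_ac)
  have "P\<^sup>2 \<le> a * (\<Sum>l<m. (z l)\<^sup>2)"
    unfolding P_def a_def by (rule Cauchy_Schwarz_ineq_sum)
  also have "(\<Sum>l<m. (z l)\<^sup>2) \<le> (\<Sum>l<m. U * (\<Sum>k\<in>K. (G k l)\<^sup>2))"
    unfolding z_def U_def by (intro sum_mono Cauchy_Schwarz_ineq_sum)
  also have "\<dots> = U * S" unfolding S_def by (simp add: sum_distrib_left sum.swap[of _ K])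
  finally have "P\<^sup>2 \<le> a * U * S"
    by (simp add: a_def mult_left_mono sum_nonneg mult.assoc)
  moreover have "(\<Sum>k<n. (u k)\<^sup>2) = (u i)\<^sup>2 + U" unfolding split(1) U_def using split(2,3) by simp
  ultimately have "2 * (u i * a + P) \<le> \<beta> * (a + S)"
    using \<beta>1 \<beta>2 by (intro cross_term_scalar_le) (auto simp: a_def S_def U_def intro!: sum_nonneg)
  moreover have "(\<Sum>k<n. \<Sum>l<m. (G k l)\<^sup>2) = a + S"
    unfolding split(1) a_def S_def using split(2,3) by simp
  ultimately show ?thesis using cross by simp
qed

lemma rank_one_rows_sum_le:
  fixes G :: "nat \<Rightarrow> nat \<Rightarrow> real" and u :: "nat \<Rightarrow> real"
  assumes i: "i < n" and c: "0 \<le> c" "c \<le> \<alpha>"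
    and \<beta>1: "2 * u i \<le> \<beta>" and \<beta>2: "u i + sqrt (\<Sum>k<n. (u k)\<^sup>2) \<le> \<beta>"
    and \<gamma>: "(\<Sum>k<n. (u k)\<^sup>2) \<le> \<gamma>" and \<gamma>': "(\<Sum>l<m. (G i l)\<^sup>2) \<le> \<gamma>'"
  shows "(\<Sum>k<n. \<Sum>l<m. (G k l + c * u k * G i l)\<^sup>2)
    \<le> (1 + \<alpha> * \<beta>) * (\<Sum>k<n. \<Sum>l<m. (G k l)\<^sup>2) + \<alpha>\<^sup>2 * \<gamma> * \<gamma>'"
proof -
  define H where "H = (\<Sum>k<n. \<Sum>l<m. (G k l)\<^sup>2)"
  define C where "C = (\<Sum>k<n. \<Sum>l<m. G k l * u k * G i l)"
  define U where "U = (\<Sum>k<n. (u k)\<^sup>2)"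
  define V where "V = (\<Sum>l<m. (G i l)\<^sup>2)"
  have H: "0 \<le> H" unfolding H_def by (intro sum_nonneg) auto
  have "\<bar>u i\<bar> \<le> sqrt U"
    unfolding U_def using i by (metis real_sqrt_abs real_sqrt_le_mono member_le_sum
        lessThan_iff zero_le_power2 finite_lessThan)
  hence \<beta>: "0 \<le> \<beta>" using \<beta>2 by (simp add: U_def)
  have "(\<Sum>k<n. \<Sum>l<m. (G k l + c * u k * G i l)\<^sup>2)
      = (\<Sum>k<n. \<Sum>l<m. (G k l)\<^sup>2 + 2 * c * (G k l * u k * G i l) + c\<^sup>2 * ((u k)\<^sup>2 * (G i l)\<^sup>2))"
    by (simp add: power2_sum power_mult_distrib mult_ac)
  also have "\<dots> = H + 2 * c * C + (\<Sum>k<n. \<Sum>l<m. c\<^sup>2 * ((u k)\<^sup>2 * (G i l)\<^sup>2))"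
    by (simp add: H_def C_def sum.distrib sum_distrib_left)
  also have "(\<Sum>k<n. \<Sum>l<m. c\<^sup>2 * ((u k)\<^sup>2 * (G i l)\<^sup>2)) = c\<^sup>2 * (U * V)"
    unfolding U_def V_def sum_product by (simp add: sum_distrib_left)
  finally have expand: "(\<Sum>k<n. \<Sum>l<m. (G k l + c * u k * G i l)\<^sup>2) = H + 2 * c * C + c\<^sup>2 * (U * V)" .
  have "2 * c * C \<le> c * (\<beta> * H)"
    using mult_left_mono[OF cross_term_le[OF i \<beta>1 \<beta>2, of G m] c(1)]
    by (simp add: C_def H_def mult_ac)
  also have "\<dots> \<le> \<alpha> * (\<beta> * H)" using c \<beta> H by (intro mult_right_mono) auto
  finally have cross: "2 * c * C \<le> \<alpha> * \<beta> * H" by simp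
  have "c\<^sup>2 * (U * V) \<le> \<alpha>\<^sup>2 * (\<gamma> * \<gamma>')"
  proof -
    have "0 \<le> U" "0 \<le> V" unfolding U_def V_def by (auto intro: sum_nonneg)
    thus ?thesis
      using c \<gamma> \<gamma>' unfolding U_def V_def by (intro mult_mono power_mono) auto
  qed
  with expand cross show ?thesis unfolding H_def[symmetric] by (simp add: algebra_simps)
qed

lemma Max_offdiag_ge:
  fixes f :: "nat \<Rightarrow> nat \<Rightarrow> 'a :: linorder"
  assumes "p < n" "q < n" "p \<noteq> q"
  shows "f p q \<le> Max {f p q | p q. p < n \<and> q < n \<and> p \<noteq> q}"
proof (rule Max_ge)
  show "finite {f p q | p q. p < n \<and> q < n \<and> p \<noteq> q}"
    by (rule finite_subset[of _ "case_prod f ` ({..<n} \<times> {..<n})"]) auto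
qed (use assms in auto)

lemma Max_index_ge:
  fixes f :: "nat \<Rightarrow> 'a :: linorder"
  assumes "k < n"
  shows "f k \<le> Max {f k | k. k < n}"
proof (rule Max_ge)
  show "finite {f k | k. k < n}" by (rule finite_subset[of _ "f ` {..<n}"]) auto
qed (use assms in auto)

lemma alpha_pq_le_alpha:
  assumes "A \<in> carrier_mat n n" "p < n" "q < n" "p \<noteq> q"
  shows "alpha_pq A w p q \<le> alpha A w"
  using Max_offdiag_ge[of p n q "alpha_pq A w"] assms by (simp add: alpha_def)

lemma Xmat_le_beta:
  assumes "A \<in> carrier_mat n n" "p < n" "q < n" "p \<noteq> q"
  shows "2 * Xmat A $$ (p,q) \<le> beta A" and "Xmat A $$ (p,q) + col_norm (Xmat A) q \<le> beta A"
  using Max_offdiag_ge[of p n q "\<lambda>p q. 2 * Xmat A $$ (p,q)"] Max_offdiag_ge[of p n q "\<lambda>p q. Xmat A $$ (p,q)"]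
    Max_index_ge[of q n "col_norm (Xmat A)"] assms
  by (simp_all add: beta_def Let_def)

lemma Xmat_col_sum_power2_le_gamma:
  assumes A: "A \<in> carrier_mat n n" and rho: "rho (abs_mat A) < 1" and q: "q < n"
  shows "(\<Sum>r<n. (Xmat A $$ (r,q))\<^sup>2) \<le> gamma A"
proof -
  have "((Xmat A)\<^sup>T * Xmat A) $$ (q,q) = (\<Sum>r<n. (Xmat A $$ (r,q))\<^sup>2)"
    using Xmat_inverse(1)[OF A rho] q by (simp add: scalar_prod_def atLeast0LessThan power2_eq_square)
  thus ?thesis using Max_index_ge[of q n "\<lambda>k. ((Xmat A)\<^sup>T * Xmat A) $$ (k,k)"] A q
    by (simp add: gamma_def)
qed

lemma Hmat_diag_le_gamma_bar:
  assumes "A \<in> carrier_mat n n" "k < n"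
  shows "Hmat A B $$ (k,k) \<le> gamma_bar A B"
  using Max_index_ge[of k n "\<lambda>k. Hmat A B $$ (k,k)"] assms by (simp add: gamma_bar_def)

theorem theorem5p1:
  fixes A B :: "real mat" and n m T i j :: nat and w :: real
  assumes "A \<in> carrier_mat n n" and "B \<in> carrier_mat n m"
    and "rho (abs_mat A) < 1"
    and "T > 0"
    and "i < n" and "j < n" and "i \<noteq> j"
    and "rho (abs_mat A + \<bar>w\<bar> \<cdot>\<^sub>m unit_outer n j i) < 1"
  shows "tr (W_fin T A B) \<le> tr (W_inf A B) \<and> tr (W_inf A B) \<le> tr (Hmat A B) \<and>
         tr (W_fin T (A + w \<cdot>\<^sub>m unit_outer n j i) B)
           \<le> (1 + alpha A w * beta A) * tr (Hmat A B) + (alpha A w)\<^sup>2 * gamma A * gamma_bar A B"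
proof -
  note A = assms(1) and B = assms(2) and rho = assms(3) and i = assms(5) and j = assms(6)
    and ij = assms(7) and rho' = assms(8)
  define X where "X = Xmat A"
  define G where "G = Xmat A * abs_mat B"
  have "tr (W_fin T (A + w \<cdot>\<^sub>m unit_outer n j i) B)
      \<le> (\<Sum>k<n. \<Sum>l<m. (G $$ (k,l) + alpha_pq A w i j * X $$ (k,j) * G $$ (i,l))\<^sup>2)"
    unfolding X_def G_def by (rule tr_W_fin_rank_one_update_le[OF A B rho i j rho'])
  also have "\<dots> \<le> (1 + alpha A w * beta A) * tr (Hmat A B) + (alpha A w)\<^sup>2 * gamma A * gamma_bar A B"
    unfolding tr_Hmat[OF A B rho, folded G_def]
  proof (rule rank_one_rows_sum_le[OF i])
    show "0 \<le> alpha_pq A w i j"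
      using Xmat_rank_one_denominator_pos[OF A rho i j rho'] by (simp add: alpha_pq_def)
    show "alpha_pq A w i j \<le> alpha A w" by (rule alpha_pq_le_alpha[OF A i j ij])
    show "2 * X $$ (i,j) \<le> beta A" unfolding X_def by (rule Xmat_le_beta(1)[OF A i j ij])
    show "X $$ (i,j) + sqrt (\<Sum>k<n. (X $$ (k,j))\<^sup>2) \<le> beta A"
      using Xmat_le_beta(2)[OF A i j ij] Xmat_inverse(1)[OF A rho] by (simp add: X_def col_norm_def)
    show "(\<Sum>k<n. (X $$ (k,j))\<^sup>2) \<le> gamma A"
      unfolding X_def by (rule Xmat_col_sum_power2_le_gamma[OF A rho j])
    show "(\<Sum>l<m. (G $$ (i,l))\<^sup>2) \<le> gamma_bar A B"
      using Hmat_diag_le_gamma_bar[OF A i, of B] Hmat_diag[OF A B rho i] by (simp add: G_def)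
  qed
  finally show ?thesis
    using tr_W_fin_le_tr_W_inf[OF A B rho] tr_W_inf_le_tr_Hmat[OF A B rho] by simp
qed

end
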